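(* For a metrizable topological group $G$ which is Weil complete (i.e. complete with respect to its left uniformity), the following are equivalent: (i) $G$ is NSS; (ii) $G$ is STAP; (iii) $G$ is HTAP; (iv) $G$ is TAP.
   Context: $e$ is the neutral element; $\prod_{k=1}^n a_k=a_1\cdots a_n$. $G$ is NSS if some neighborhood of $e$ contains no nontrivial subgroup of $G$. A sequence $(g_n)$ in $G$ is hyper-multipliable if for every integer sequence $(m_n)$ the sequence $\left(\prod_{k=1}^n g_k^{m_k}\right)_n$ converges in $G$; hyper-converging if $g_n^{m_n}\to e$ for every integer sequence $(m_n)$. A subset $A\subset G$ is absolutely productive if every sequence of pairwise distinct elements of $A$ is hyper-multipliable. $G$ is TAP if every absolutely productive subset is finite; HTAP if no sequence of pairwise distinct elements is hyper-multipliable; STAP if no sequence of pairwise distinct elements is hyper-converging. *)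

theory Defs
  imports "HOL-Analysis.Analysis"
begin

text \<open>Topological groups are rendered as types of class topological_group_add
  (group_add is not assumed commutative; the group operation is written additively:
  neutral element 0, product x + y, inverse - x).\<close>

definition zmul :: "int \<Rightarrow> 'a::group_add \<Rightarrow> 'a" where
  "zmul m g = (if 0 \<le> m then (((+) g) ^^ nat m) 0 else - ((((+) g) ^^ nat (- m)) 0))"

primrec oprod :: "(nat \<Rightarrow> 'a::monoid_add) \<Rightarrow> nat \<Rightarrow> 'a" where
  "oprod f 0 = 0"
| "oprod f (Suc n) = oprod f n + f n"

definition is_subgroup :: "'a::group_add set \<Rightarrow> bool" where
  "is_subgroup H \<longleftrightarrow> 0 \<in> H \<and> (\<forall>x\<in>H. \<forall>y\<in>H. x + y \<in> H) \<and> (\<forall>x\<in>H. - x \<in> H)"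

definition NSS :: "'a::topological_group_add itself \<Rightarrow> bool" where
  "NSS _ \<longleftrightarrow> (\<exists>U. open U \<and> (0::'a) \<in> U \<and> (\<forall>H. is_subgroup H \<and> H \<subseteq> U \<longrightarrow> H = {0}))"

definition hyper_multipliable :: "(nat \<Rightarrow> 'a::topological_group_add) \<Rightarrow> bool" where
  "hyper_multipliable g \<longleftrightarrow> (\<forall>m::nat \<Rightarrow> int. convergent (\<lambda>n. oprod (\<lambda>k. zmul (m k) (g k)) n))"

definition hyper_converging :: "(nat \<Rightarrow> 'a::topological_group_add) \<Rightarrow> bool" where
  "hyper_converging g \<longleftrightarrow> (\<forall>m::nat \<Rightarrow> int. (\<lambda>n. zmul (m n) (g n)) \<longlonglongrightarrow> 0)"

definition absolutely_productive :: "'a::topological_group_add set \<Rightarrow> bool" where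
  "absolutely_productive A \<longleftrightarrow> (\<forall>g. inj g \<and> range g \<subseteq> A \<longrightarrow> hyper_multipliable g)"

definition TAP :: "'a::topological_group_add itself \<Rightarrow> bool" where
  "TAP _ \<longleftrightarrow> (\<forall>A::'a set. absolutely_productive A \<longrightarrow> finite A)"

definition HTAP :: "'a::topological_group_add itself \<Rightarrow> bool" where
  "HTAP _ \<longleftrightarrow> (\<forall>g::nat \<Rightarrow> 'a. inj g \<longrightarrow> \<not> hyper_multipliable g)"

definition STAP :: "'a::topological_group_add itself \<Rightarrow> bool" where
  "STAP _ \<longleftrightarrow> (\<forall>g::nat \<Rightarrow> 'a. inj g \<longrightarrow> \<not> hyper_converging g)"

text \<open>Cauchy filters for the left uniformity (entourages {(x,y). -x + y \<in> U},
  U a neighbourhood of 0); Weil complete = every left Cauchy filter converges.\<close>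
definition left_cauchy_filter :: "'a::topological_group_add filter \<Rightarrow> bool" where
  "left_cauchy_filter F \<longleftrightarrow> F \<noteq> bot \<and>
     (\<forall>U. open U \<and> (0::'a) \<in> U \<longrightarrow>
        (\<exists>A. eventually (\<lambda>x. x \<in> A) F \<and> (\<forall>x\<in>A. \<forall>y\<in>A. - x + y \<in> U)))"

definition weil_complete :: "'a::topological_group_add itself \<Rightarrow> bool" where
  "weil_complete _ \<longleftrightarrow> (\<forall>F::'a filter. left_cauchy_filter F \<longrightarrow> (\<exists>x. F \<le> nhds x))"

end

theory Submission
  imports Defs
begin

(*
  NSS implies STAP: if the neighbourhood U of 0 contains no nontrivial subgroup, every g \<noteq> 0 has
  a multiple outside U, so for injective (g n) the multiples m n g n can be chosen outside U for
  all but one n.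

  TAP implies NSS: take a base (V n) at 0 with V (n+1) + V (n+1) + V (n+1) \<subseteq> V n. If G is not
  NSS, pick h n \<noteq> 0 whose cyclic subgroup lies in V n. A finite sum of terms from V k1, ..., V kr
  with distinct indices ki > N lies in V N (split at the term of least index and induct), so
  for injective \<sigma> the partial products of the multiples of h (\<sigma> k) form a left Cauchy sequence,
  which converges by Weil completeness. Thus {h n} is absolutely productive, hence finite by
  TAP, and some y = h n \<noteq> 0 lies in infinitely many V n, which is impossible in a T1 space.
*)

abbreviation npow :: "nat \<Rightarrow> 'a::monoid_add \<Rightarrow> 'a" where
  "npow k g \<equiv> (((+) g) ^^ k) 0"

lemma npow_Suc_right: "npow (Suc k) g = npow k g + g"
proof (induction k)
  case (Suc k)
  then show ?case by (metis add.assoc funpow.simps(2) o_apply)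
qed simp

lemma zmul_of_nat: "zmul (int k) g = npow k g"
  by (simp add: zmul_def)

lemma zmul_neg_of_nat: "zmul (- int k) g = - npow k g"
proof (cases "k = 0")
  case False
  then have "\<not> 0 \<le> - int k" "nat (- (- int k)) = k" by simp_all
  then show ?thesis by (simp only: zmul_def if_False)
qed (simp add: zmul_def)

lemma zmul_0 [simp]: "zmul 0 g = 0"
  by (simp add: zmul_def)

lemma zmul_1 [simp]: "zmul 1 g = g"
  by (simp add: zmul_def)

lemma zmul_add1: "zmul (a + 1) g = zmul a g + g"
proof (cases a)
  case (nonneg k)
  then have "a + 1 = int (Suc k)" by simp
  then show ?thesis using nonneg by (simp only: zmul_of_nat npow_Suc_right)
next
  case (neg k)
  then have "a + 1 = - int k" by simp
  then show ?thesis
    using neg by (simp only: zmul_neg_of_nat) (simp add: minus_add add.assoc)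
qed

lemma zmul_diff1: "zmul (a - 1) g = zmul a g - g"
  using zmul_add1[of "a - 1" g] by (simp add: eq_diff_eq)

lemma zmul_add: "zmul (a + b) g = zmul a g + zmul b g"
proof (induction b rule: int_induct[where k = 0])
  case (step1 i)
  have "zmul (a + (i + 1)) g = zmul (a + i) g + g"
    using zmul_add1[of "a + i" g] by (simp add: add.assoc)
  then show ?case using step1 by (simp add: zmul_add1 add.assoc)
next
  case (step2 i)
  have "zmul (a + (i - 1)) g = zmul (a + i) g - g"
    using zmul_diff1[of "a + i" g] by (simp add: add_diff_eq)
  then show ?case using step2 by (simp add: zmul_diff1 add_diff_eq)
qed simp

lemma zmul_uminus: "zmul (- a) g = - zmul a g"
  by (simp add: zmul_def)

lemma zmul_mem_subgroup:
  assumes "is_subgroup H" "g \<in> H"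
  shows "zmul m g \<in> H"
proof -
  have "npow k g \<in> H" for k
    by (induction k) (use assms in \<open>auto simp: is_subgroup_def\<close>)
  then show ?thesis
    using assms(1)
    by (cases m rule: int_cases2) (auto simp: zmul_of_nat zmul_neg_of_nat is_subgroup_def)
qed

lemma is_subgroup_range_zmul: "is_subgroup (range (\<lambda>m. zmul m g))"
  unfolding is_subgroup_def
  by (auto simp: zmul_add[symmetric] zmul_uminus[symmetric] intro: range_eqI[of _ _ 0])

lemma ex_zmul_notin_if_no_subgroup:
  assumes "\<forall>H. is_subgroup H \<and> H \<subseteq> U \<longrightarrow> H = {0}" and "g \<noteq> 0"
  shows "\<exists>m. zmul m g \<notin> U"
proof (rule ccontr)
  assume "\<nexists>m. zmul m g \<notin> U"
  then have "range (\<lambda>m. zmul m g) = {0}"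
    using assms(1) is_subgroup_range_zmul by blast
  then have "zmul 1 g = 0" by blast
  with assms(2) show False by simp
qed

lemma NSS_imp_STAP: "NSS TYPE('a::topological_group_add) \<Longrightarrow> STAP TYPE('a)"
proof -
  assume "NSS TYPE('a)"
  then obtain U :: "'a set"
    where U: "open U" "0 \<in> U" "\<forall>H. is_subgroup H \<and> H \<subseteq> U \<longrightarrow> H = {0}"
    unfolding NSS_def by blast
  show ?thesis
    unfolding STAP_def
  proof (intro allI impI notI)
    fix g :: "nat \<Rightarrow> 'a"
    assume "inj g" and "hyper_converging g"
    have "\<forall>n. \<exists>k. g n \<noteq> 0 \<longrightarrow> zmul k (g n) \<notin> U"
      using ex_zmul_notin_if_no_subgroup[OF U(3)] by blast
    then obtain m where m: "\<And>n. g n \<noteq> 0 \<Longrightarrow> zmul (m n) (g n) \<notin> U"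
      by metis
    have "(\<lambda>n. zmul (m n) (g n)) \<longlonglongrightarrow> 0"
      using \<open>hyper_converging g\<close> unfolding hyper_converging_def by blast
    then have "eventually (\<lambda>n. zmul (m n) (g n) \<in> U) sequentially"
      using U(1,2) by (rule topological_tendstoD)
    then obtain N where N: "\<And>n. N \<le> n \<Longrightarrow> zmul (m n) (g n) \<in> U"
      unfolding eventually_sequentially by blast
    have "g N \<noteq> 0 \<or> g (Suc N) \<noteq> 0"
      using \<open>inj g\<close> by (metis injD n_not_Suc_n)
    then show False
      using m N[of N] N[of "Suc N"] by auto
  qed
qed

lemma convergent_oprod_LIMSEQ_zero:
  fixes f :: "nat \<Rightarrow> 'a::topological_group_add"
  assumes "convergent (oprod f)"
  shows "f \<longlonglongrightarrow> 0"
proof -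
  obtain L where L: "oprod f \<longlonglongrightarrow> L"
    using assms unfolding convergent_def by blast
  have "(\<lambda>n. - oprod f n + oprod f (Suc n)) \<longlonglongrightarrow> - L + L"
    by (intro tendsto_intros L LIMSEQ_Suc)
  then show ?thesis by simp
qed

lemma hyper_multipliable_imp_hyper_converging:
  "hyper_multipliable g \<Longrightarrow> hyper_converging g"
  unfolding hyper_multipliable_def hyper_converging_def
  by (blast intro: convergent_oprod_LIMSEQ_zero)

lemma STAP_imp_HTAP: "STAP TYPE('a::topological_group_add) \<Longrightarrow> HTAP TYPE('a)"
  unfolding STAP_def HTAP_def using hyper_multipliable_imp_hyper_converging by blast

lemma HTAP_imp_TAP: "HTAP TYPE('a::topological_group_add) \<Longrightarrow> TAP TYPE('a)"
  unfolding HTAP_def TAP_def absolutely_productive_def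
  using infinite_countable_subset by blast

locale add3_chain =
  fixes V :: "nat \<Rightarrow> 'a::monoid_add set"
  assumes zero_mem [simp]: "0 \<in> V n"
    and add3_mem:
      "x \<in> V (Suc n) \<Longrightarrow> y \<in> V (Suc n) \<Longrightarrow> z \<in> V (Suc n) \<Longrightarrow> x + y + z \<in> V n"
begin

lemma decseq: "decseq V"
proof (rule decseq_SucI)
  show "V (Suc n) \<subseteq> V n" for n
  proof
    fix y
    assume "y \<in> V (Suc n)"
    then show "y \<in> V n" using add3_mem[of 0 n y 0] by simp
  qed
qed

lemma sum_list_mem:
  assumes "distinct (map snd ps)" and "\<forall>(x, k) \<in> set ps. x \<in> V k \<and> N < k"
  shows "sum_list (map fst ps) \<in> V N"
  using assms
proof (induction "length ps" arbitrary: ps N rule: less_induct)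
  case less
  show ?case
  proof (cases "ps = []")
    case False
    define j where "j = Min (snd ` set ps)"
    have "j \<in> snd ` set ps"
      using False unfolding j_def by (intro Min_in) auto
    then obtain x where "(x, j) \<in> set ps" by auto
    then obtain ps1 ps2 where ps: "ps = ps1 @ (x, j) # ps2"
      by (meson split_list)
    have j_notin: "j \<notin> snd ` (set ps1 \<union> set ps2)"
      using less.prems(1) unfolding ps by auto
    have above: "j < k" if "(y, k) \<in> set ps1 \<union> set ps2" for y k
    proof -
      have "k \<in> snd ` set ps"
        using that unfolding ps by force
      then have "j \<le> k"
        unfolding j_def by simp
      moreover have "k \<noteq> j"
        using j_notin that by (metis image_eqI snd_conv)
      ultimately show ?thesis by simp
    qed
    have "sum_list (map fst qs) \<in> V j" if "qs = ps1 \<or> qs = ps2" for qs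
    proof (rule less.hyps)
      show "length qs < length ps"
        using that unfolding ps by auto
      show "distinct (map snd qs)"
        using less.prems(1) that unfolding ps by auto
      show "\<forall>(y, k) \<in> set qs. y \<in> V k \<and> j < k"
        using less.prems(2) above that unfolding ps by fastforce
    qed
    then have "sum_list (map fst ps1) \<in> V j" "sum_list (map fst ps2) \<in> V j"
      by blast+
    moreover have "x \<in> V j" "N < j"
      using less.prems(2) unfolding ps by auto
    moreover obtain j' where "j = Suc j'" "N \<le> j'"
      using \<open>N < j\<close> by (cases j) auto
    ultimately have "sum_list (map fst ps1) + x + sum_list (map fst ps2) \<in> V N"
      using add3_mem decseq by (metis decseqD subsetD)
    then show ?thesis by (simp add: ps add.assoc)
  qed simp
qed

end

lemma oprod_eq_sum_list: "oprod f n = sum_list (map f [0..<n])"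
  by (induction n) simp_all

lemma oprod_diff:
  fixes f :: "nat \<Rightarrow> 'a::group_add"
  assumes "i \<le> j"
  shows "- oprod f i + oprod f j = sum_list (map f [i..<j])"
  using assms upt_add_eq_append[of 0 i "j - i"] by (simp add: oprod_eq_sum_list)

lemma add3_chain_oprod_diff_mem:
  fixes x :: "nat \<Rightarrow> 'a::group_add"
  assumes "add3_chain V" "inj \<sigma>" "\<And>k. x k \<in> V (\<sigma> k)"
    and "\<And>k. i \<le> k \<Longrightarrow> N < \<sigma> k" "i \<le> j"
  shows "- oprod x i + oprod x j \<in> V N"
proof -
  let ?ps = "map (\<lambda>k. (x k, \<sigma> k)) [i..<j]"
  have "sum_list (map fst ?ps) \<in> V N"
    by (rule add3_chain.sum_list_mem[OF assms(1)])
      (use assms(2-4) in \<open>auto simp: distinct_map o_def inj_on_def\<close>)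
  then show ?thesis
    using assms(5) by (simp add: oprod_diff o_def)
qed

definition left_cauchy_seq :: "(nat \<Rightarrow> 'a::topological_group_add) \<Rightarrow> bool" where
  "left_cauchy_seq P \<longleftrightarrow> (\<forall>U. open U \<and> 0 \<in> U \<longrightarrow> (\<exists>a. \<forall>i\<ge>a. \<forall>j\<ge>i. - P i + P j \<in> U))"

lemma left_cauchy_filter_sequentially:
  fixes P :: "nat \<Rightarrow> 'a::topological_group_add"
  assumes "left_cauchy_seq P"
  shows "left_cauchy_filter (filtermap P sequentially)"
  unfolding left_cauchy_filter_def
proof (intro conjI allI impI)
  show "filtermap P sequentially \<noteq> bot"
    by (simp add: filtermap_bot_iff)
next
  fix U :: "'a set"
  assume U: "open U \<and> 0 \<in> U"
  have "open (U \<inter> uminus -` U)"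
    using U by (intro open_Int open_vimage continuous_intros) auto
  then obtain a where a: "\<And>i j. a \<le> i \<Longrightarrow> i \<le> j \<Longrightarrow> - P i + P j \<in> U \<inter> uminus -` U"
    using assms U unfolding left_cauchy_seq_def by (metis IntI minus_zero vimageI2)
  have "- P i + P j \<in> U" if "a \<le> i" "a \<le> j" for i j
  proof (cases "i \<le> j")
    case False
    then have "- (- P j + P i) \<in> U"
      using a[of j i] that by auto
    then show ?thesis by (simp add: minus_add)
  qed (use a that in blast)
  then show "\<exists>A. eventually (\<lambda>x. x \<in> A) (filtermap P sequentially)
      \<and> (\<forall>x\<in>A. \<forall>y\<in>A. - x + y \<in> U)"
    by (intro exI[of _ "P ` {a..}"]) (auto simp: eventually_filtermap eventually_sequentially)
qed

lemma weil_complete_convergent: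
  fixes P :: "nat \<Rightarrow> 'a::topological_group_add"
  assumes "weil_complete TYPE('a)" and "left_cauchy_seq P"
  shows "convergent P"
proof -
  obtain L where "filtermap P sequentially \<le> nhds L"
    using assms left_cauchy_filter_sequentially unfolding weil_complete_def by blast
  then show ?thesis
    unfolding convergent_def filterlim_def by blast
qed

lemma left_cauchy_seq_oprod_add3_chain:
  fixes x :: "nat \<Rightarrow> 'a::topological_group_add"
  assumes "add3_chain V"
    and base: "\<And>U. open U \<Longrightarrow> 0 \<in> U \<Longrightarrow> \<exists>n. V n \<subseteq> U"
    and "inj \<sigma>" "\<And>k. x k \<in> V (\<sigma> k)"
  shows "left_cauchy_seq (oprod x)"
  unfolding left_cauchy_seq_def
proof (intro allI impI)
  fix U :: "'a set"
  assume "open U \<and> 0 \<in> U"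
  then obtain N where N: "V N \<subseteq> U"
    using base by blast
  have "finite (\<sigma> -` {..N})"
    using \<open>inj \<sigma>\<close> by (intro finite_vimageI) auto
  then obtain a where "\<And>k. \<sigma> k \<le> N \<Longrightarrow> k < a"
    by (metis finite_nat_set_iff_bounded vimageI atMost_iff)
  then have "\<And>k. a \<le> k \<Longrightarrow> N < \<sigma> k"
    using not_le by blast
  then show "\<exists>a. \<forall>i\<ge>a. \<forall>j\<ge>i. - oprod x i + oprod x j \<in> U"
    using add3_chain_oprod_diff_mem[OF assms(1,3,4)] N by (meson order_trans subsetD)
qed

lemma absolutely_productive_range_if_zmul_mem_add3_chain:
  fixes h :: "nat \<Rightarrow> 'a::topological_group_add"
  assumes "weil_complete TYPE('a)" "add3_chain V"
    and "\<And>U. open U \<Longrightarrow> 0 \<in> U \<Longrightarrow> \<exists>n. V n \<subseteq> U"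
    and "\<And>n m. zmul m (h n) \<in> V n"
  shows "absolutely_productive (range h)"
  unfolding absolutely_productive_def hyper_multipliable_def
proof (intro allI impI)
  fix g :: "nat \<Rightarrow> 'a" and m :: "nat \<Rightarrow> int"
  assume g: "inj g \<and> range g \<subseteq> range h"
  then have "\<forall>k. \<exists>j. g k = h j" by blast
  then obtain \<sigma> where \<sigma>: "\<And>k. g k = h (\<sigma> k)" by metis
  have "inj \<sigma>"
    using g \<sigma> by (metis injD injI)
  have zmul_mem: "zmul (m k) (g k) \<in> V (\<sigma> k)" for k
    using assms(4) unfolding \<sigma> .
  have "left_cauchy_seq (oprod (\<lambda>k. zmul (m k) (g k)))"
    by (rule left_cauchy_seq_oprod_add3_chain[OF assms(2) _ \<open>inj \<sigma>\<close>])
      (use assms(3) zmul_mem in auto)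
  then show "convergent (\<lambda>n. oprod (\<lambda>k. zmul (m k) (g k)) n)"
    using assms(1) weil_complete_convergent by blast
qed

lemma open_zero_add_elim:
  fixes U :: "'a::topological_monoid_add set"
  assumes "open U" "0 \<in> U"
  obtains W where "open W" "0 \<in> W" "\<And>x y. x \<in> W \<Longrightarrow> y \<in> W \<Longrightarrow> x + y \<in> U"
proof -
  have "open ((\<lambda>p. fst p + snd p) -` U :: ('a \<times> 'a) set)"
    by (intro open_vimage assms continuous_intros)
  moreover have "(0, 0) \<in> (\<lambda>p. fst p + snd p) -` U"
    using assms by simp
  ultimately obtain A B where "open A" "open B" "(0, 0) \<in> A \<times> B"
    "A \<times> B \<subseteq> (\<lambda>p. fst p + snd p) -` U"
    by (rule open_prod_elim)
  then show thesis
    by (intro that[of "A \<inter> B"]) auto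
qed

lemma open_zero_add3_elim:
  fixes U :: "'a::topological_monoid_add set"
  assumes "open U" "0 \<in> U"
  obtains W where "open W" "0 \<in> W"
    "\<And>x y z. x \<in> W \<Longrightarrow> y \<in> W \<Longrightarrow> z \<in> W \<Longrightarrow> x + y + z \<in> U"
proof -
  obtain W1 where W1: "open W1" "0 \<in> W1" "\<And>x y. x \<in> W1 \<Longrightarrow> y \<in> W1 \<Longrightarrow> x + y \<in> U"
    using open_zero_add_elim[OF assms] by blast
  obtain W2 where W2: "open W2" "0 \<in> W2" "\<And>x y. x \<in> W2 \<Longrightarrow> y \<in> W2 \<Longrightarrow> x + y \<in> W1"
    using open_zero_add_elim[OF W1(1,2)] by blast
  show thesis
    by (rule that[of "W1 \<inter> W2"]) (use W1 W2 in auto)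
qed

lemma first_countable_obtain_nhds_seq:
  assumes "first_countable (euclidean :: 'a::topological_space topology)"
  obtains b :: "nat \<Rightarrow> 'a::topological_space set"
  where "\<And>n. open (b n)" "\<And>n. x \<in> b n" "\<And>U. open U \<Longrightarrow> x \<in> U \<Longrightarrow> \<exists>n. b n \<subseteq> U"
proof -
  have "\<exists>B. countable B \<and> (\<forall>V\<in>B. open V)
      \<and> (\<forall>U. open U \<and> x \<in> U \<longrightarrow> (\<exists>V\<in>B. x \<in> V \<and> V \<subseteq> U))"
    using bspec[OF assms[unfolded first_countable_def], of x] by simp
  then obtain B where "countable B" and B_open: "\<forall>V\<in>B. open V"
    and B: "\<forall>U. open U \<and> x \<in> U \<longrightarrow> (\<exists>V\<in>B. x \<in> V \<and> V \<subseteq> U)"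
    by blast
  define B' where "B' = {V \<in> B. x \<in> V}"
  have "B' \<noteq> {}"
    using B[rule_format, of UNIV] by (auto simp: B'_def)
  moreover have "countable B'"
    using \<open>countable B\<close> by (simp add: B'_def)
  ultimately have range_B': "range (from_nat_into B') = B'"
    by simp
  show thesis
  proof (rule that[of "from_nat_into B'"])
    fix n
    have "from_nat_into B' n \<in> B'"
      using range_B' by blast
    then show "open (from_nat_into B' n)" "x \<in> from_nat_into B' n"
      using B_open by (simp_all add: B'_def)
  next
    fix U :: "'a set"
    assume "open U" "x \<in> U"
    then obtain V where "V \<in> B" "x \<in> V" "V \<subseteq> U"
      using B by blast
    then have "V \<in> B'" "V \<subseteq> U"
      by (simp_all add: B'_def)
    then show "\<exists>n. from_nat_into B' n \<subseteq> U"
      using range_B' by (metis rangeE)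
  qed
qed

lemma first_countable_obtain_add3_chain:
  assumes "first_countable (euclidean :: 'a::topological_monoid_add topology)"
  obtains V :: "nat \<Rightarrow> 'a::topological_monoid_add set"
  where "add3_chain V" "\<And>n. open (V n)" "\<And>U. open U \<Longrightarrow> 0 \<in> U \<Longrightarrow> \<exists>n. V n \<subseteq> U"
proof -
  obtain b :: "nat \<Rightarrow> 'a set" where b: "\<And>n. open (b n)" "\<And>n. 0 \<in> b n"
    and b_base: "\<And>U. open U \<Longrightarrow> 0 \<in> U \<Longrightarrow> \<exists>n. b n \<subseteq> U"
    using first_countable_obtain_nhds_seq[OF assms, where x = 0] by blast
  define W where "W U = (SOME W. open W \<and> 0 \<in> W \<and> (\<forall>x\<in>W. \<forall>y\<in>W. \<forall>z\<in>W. x + y + z \<in> U))"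
    for U :: "'a set"
  have W: "open (W U) \<and> 0 \<in> W U \<and> (\<forall>x\<in>W U. \<forall>y\<in>W U. \<forall>z\<in>W U. x + y + z \<in> U)"
    if "open U" "0 \<in> U" for U
    unfolding W_def by (rule someI_ex) (rule open_zero_add3_elim[OF that], blast)
  define V where "V = rec_nat UNIV (\<lambda>n Vn. W (Vn \<inter> b n))"
  have V_0: "V 0 = UNIV" and V_Suc: "V (Suc n) = W (V n \<inter> b n)" for n
    by (simp_all add: V_def)
  have V_open: "open (V n) \<and> 0 \<in> V n" for n
  proof (induction n)
    case (Suc n)
    then have "open (V n \<inter> b n)" "0 \<in> V n \<inter> b n"
      using b by auto
    then show ?case
      unfolding V_Suc using W by blast
  qed (simp add: V_0)
  have V_add3: "x + y + z \<in> V n \<inter> b n"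
    if "x \<in> V (Suc n)" "y \<in> V (Suc n)" "z \<in> V (Suc n)" for n x y z
  proof -
    have "open (V n \<inter> b n)" "0 \<in> V n \<inter> b n"
      using V_open b by auto
    then show ?thesis
      using W that unfolding V_Suc by blast
  qed
  show thesis
  proof (rule that[of V])
    show "add3_chain V"
      by unfold_locales (use V_open V_add3 in blast)+
    show "open (V n)" for n
      using V_open by blast
    fix U :: "'a set"
    assume "open U" "0 \<in> U"
    then obtain n where "b n \<subseteq> U"
      using b_base by blast
    moreover have "V (Suc n) \<subseteq> b n"
      using V_add3[of _ n 0 0] V_open[of "Suc n"] by auto
    ultimately show "\<exists>n. V n \<subseteq> U"
      by blast
  qed
qed

lemma t1_eq_if_mem_infinitely_often:
  fixes V :: "nat \<Rightarrow> 'a::topological_space set"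
  assumes "t1_space (euclidean :: 'a topology)" "decseq V"
    and base: "\<And>U. open U \<Longrightarrow> z \<in> U \<Longrightarrow> \<exists>n. V n \<subseteq> U"
    and "infinite {n. y \<in> V n}"
  shows "y = z"
proof (rule ccontr)
  assume "y \<noteq> z"
  then have "\<exists>U. open U \<and> z \<in> U \<and> y \<notin> U"
    using bspec[OF bspec[OF assms(1)[unfolded t1_space_def], of z], of y] by simp
  then obtain U where "open U" "z \<in> U" "y \<notin> U"
    by blast
  then obtain N where "V N \<subseteq> U"
    using base by blast
  obtain n where "N \<le> n" "y \<in> V n"
    using assms(4) unfolding infinite_nat_iff_unbounded_le by auto
  have "V n \<subseteq> V N"
    using \<open>decseq V\<close> \<open>N \<le> n\<close> by (rule decseqD)
  with \<open>y \<in> V n\<close> \<open>V N \<subseteq> U\<close> \<open>y \<notin> U\<close> show False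
    by blast
qed

lemma TAP_imp_NSS:
  assumes "first_countable (euclidean :: 'a::topological_group_add topology)"
    and "t1_space (euclidean :: 'a topology)"
    and "weil_complete TYPE('a)" and "TAP TYPE('a)"
  shows "NSS TYPE('a)"
proof (rule ccontr)
  assume not_NSS: "\<not> NSS TYPE('a)"
  obtain V :: "nat \<Rightarrow> 'a set" where V: "add3_chain V" "\<And>n. open (V n)"
    and base: "\<And>U. open U \<Longrightarrow> 0 \<in> U \<Longrightarrow> \<exists>n. V n \<subseteq> U"
    using first_countable_obtain_add3_chain[OF assms(1)] by blast
  have "\<exists>y. y \<noteq> 0 \<and> (\<forall>m. zmul m y \<in> V n)" for n
  proof -
    obtain H where H: "is_subgroup H" "H \<subseteq> V n" "H \<noteq> {0}"
      using not_NSS V(2) add3_chain.zero_mem[OF V(1)] unfolding NSS_def by blast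
    then obtain y where "y \<in> H" "y \<noteq> 0"
      unfolding is_subgroup_def by blast
    then show ?thesis
      using H zmul_mem_subgroup by blast
  qed
  then obtain h where h: "\<And>n. h n \<noteq> 0" "\<And>n m. zmul m (h n) \<in> V n"
    by metis
  have "absolutely_productive (range h)"
    by (rule absolutely_productive_range_if_zmul_mem_add3_chain[OF assms(3) V(1) _ h(2)])
      (use base in auto)
  then have "finite (range h)"
    using assms(4) unfolding TAP_def by blast
  then obtain y where "y \<in> range h" and "infinite (h -` {y})"
    by (rule inf_img_fin_domE) simp
  moreover have "h -` {y} \<subseteq> {n. y \<in> V n}"
    using h(2)[of 1] by auto
  ultimately have "y = 0"
    using t1_eq_if_mem_infinitely_often[OF assms(2) add3_chain.decseq[OF V(1)]] base
    by (metis infinite_super)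
  with \<open>y \<in> range h\<close> h(1) show False
    by auto
qed

theorem theorem5p4:
  assumes "metrizable_space (euclidean :: 'a::topological_group_add topology)"
    and "weil_complete TYPE('a)"
  shows "(NSS TYPE('a) \<longleftrightarrow> STAP TYPE('a)) \<and> (STAP TYPE('a) \<longleftrightarrow> HTAP TYPE('a))
         \<and> (HTAP TYPE('a) \<longleftrightarrow> TAP TYPE('a))"
proof -
  have "TAP TYPE('a) \<Longrightarrow> NSS TYPE('a)"
    using TAP_imp_NSS metrizable_imp_first_countable metrizable_imp_t1_space assms by blast
  then show ?thesis
    using NSS_imp_STAP[where 'a='a] STAP_imp_HTAP[where 'a='a] HTAP_imp_TAP[where 'a='a] by blast
qed

end
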